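(* Let $\mathcal G=(V_{\min},V_{\max},E,w,\lambda)$ be a discounted payoff game, let $\sigma$ be a joint strategy, and let $\nu$ be an optimal solution for $f_\sigma$, i.e. a basis valuation of $H$ that minimises $f_\sigma$ over all solutions of $H$. Then: (1) if $\sigma$ is co-optimal, then $f_\sigma(\nu)=0$; (2) if $\nu$ defines strategies for both players and these strategies are the ones given by $\sigma$ (i.e. for every $v\in V$ the inequation $I_{(v,\sigma(v))}$ holds with equality at $\nu$), then $\sigma$ is co-optimal and $\nu=\mathrm{val}(\mathcal G)$.
   Context: A discounted payoff game (DPG) is a tuple $\mathcal G=(V_{\min},V_{\max},E,w,\lambda)$ where $V=V_{\min}\cup V_{\max}$ is a finite set of vertices partitioned into disjoint sets $V_{\min}$ (controlled by player Min) and $V_{\max}$ (controlled by player Max), $E\subseteq V\times V$ is such that every vertex has at least one outgoing edge, $w:E\to\mathbb R$ is a weight function and $\lambda:E\to[0,1)$ a discount function (write $w_e,\lambda_e$). The outcome of an infinite play $e_0e_1e_2\ldots$ (with $e_i=(v_i,v_{i+1})\in E$) is $\sum_{i\ge0}w_{e_i}\prod_{j<i}\lambda_{e_j}$. A joint strategy is a map $\sigma:V\to V$ with $(v,\sigma(v))\in E$ for all $v$; its restrictions to $V_{\min}$ and $V_{\max}$ are positional strategies of Min and Max. $\mathrm{val}(\sigma)(v)$ is the outcome of the unique play from $v$ following $\sigma$. The value of the game is $\mathrm{val}(\mathcal G)(v)=\sup_{\sigma_{\max}}\inf_{\sigma_{\min}}$ of the outcome of the play from $v$ (over positional strategies; these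 games are positionally determined). A joint strategy $\sigma$ is co-optimal iff $\mathrm{val}(\sigma)=\mathrm{val}(\mathcal G)$. $H$ is the system of inequations over unknowns $x\in\mathbb R^V$ containing, for each edge $e=(v,v')$, the inequation $I_e$: $x(v)\ge w_e+\lambda_e x(v')$ if $v\in V_{\max}$ and $x(v)\le w_e+\lambda_e x(v')$ if $v\in V_{\min}$. For a valuation $x$ and edge $(v,v')$, $\mathsf{offset}(x,(v,v'))=x(v)-(w_{(v,v')}+\lambda_{(v,v')}x(v'))$ if $v\in V_{\max}$ and $(w_{(v,v')}+\lambda_{(v,v')}x(v'))-x(v)$ otherwise. For a joint strategy $\sigma$, $f_\sigma(x)=\sum_{v\in V}\mathsf{offset}(x,(v,\sigma(v)))$. A basis of $H$ is a set of $|V|$ inequations of $H$ whose equality versions have a unique common solution; if that solution satisfies all of $H$ it is called the (basis) valuation of that basis. A valuation $x$ defines strategies for both players if every vertex $v$ has an outgoing edge $e$ such that $I_e$ holds with equality at $x$. *)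

theory Defs
  imports "HOL-Analysis.Analysis"
begin

text \<open>Vertices form a finite type 'v (V = UNIV).
  Vmax is the set of Max vertices; Min vertices are the complement.\<close>

definition dpg :: "'v::finite set \<Rightarrow> ('v \<times> 'v) set \<Rightarrow> ('v \<times> 'v \<Rightarrow> real) \<Rightarrow> bool" where
  "dpg Vmax E lam \<longleftrightarrow> (\<forall>v. \<exists>v'. (v, v') \<in> E) \<and> (\<forall>e\<in>E. 0 \<le> lam e \<and> lam e < 1)"

definition joint_strategy :: "('v \<times> 'v) set \<Rightarrow> ('v \<Rightarrow> 'v) \<Rightarrow> bool" where
  "joint_strategy E \<sigma> \<longleftrightarrow> (\<forall>v. (v, \<sigma> v) \<in> E)"

definition play_val :: "('v \<times> 'v \<Rightarrow> real) \<Rightarrow> ('v \<times> 'v \<Rightarrow> real) \<Rightarrow> ('v \<Rightarrow> 'v) \<Rightarrow> 'v \<Rightarrow> real" where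
  "play_val w lam \<sigma> v =
     (\<Sum>i. w ((\<sigma> ^^ i) v, (\<sigma> ^^ Suc i) v) * (\<Prod>j<i. lam ((\<sigma> ^^ j) v, (\<sigma> ^^ Suc j) v)))"

definition combine :: "'v set \<Rightarrow> ('v \<Rightarrow> 'v) \<Rightarrow> ('v \<Rightarrow> 'v) \<Rightarrow> ('v \<Rightarrow> 'v)" where
  "combine Vmax smax smin = (\<lambda>u. if u \<in> Vmax then smax u else smin u)"

text \<open>Value of the game: sup over positional Max strategies of inf over positional Min
  strategies of the outcome (strategies given as functions choosing edges, only their
  restriction to the owner's vertices matters).\<close>
definition game_val :: "'v::finite set \<Rightarrow> ('v \<times> 'v) set \<Rightarrow> ('v \<times> 'v \<Rightarrow> real) \<Rightarrow> ('v \<times> 'v \<Rightarrow> real) \<Rightarrow> 'v \<Rightarrow> real" where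
  "game_val Vmax E w lam v =
     (SUP smax \<in> {s. \<forall>u\<in>Vmax. (u, s u) \<in> E}.
        INF smin \<in> {s. \<forall>u\<in>-Vmax. (u, s u) \<in> E}.
           play_val w lam (combine Vmax smax smin) v)"

definition co_optimal :: "'v::finite set \<Rightarrow> ('v \<times> 'v) set \<Rightarrow> ('v \<times> 'v \<Rightarrow> real) \<Rightarrow> ('v \<times> 'v \<Rightarrow> real) \<Rightarrow> ('v \<Rightarrow> 'v) \<Rightarrow> bool" where
  "co_optimal Vmax E w lam \<sigma> \<longleftrightarrow> play_val w lam \<sigma> = game_val Vmax E w lam"

text \<open>offset(x,(v,v')).  Inequation I_e holds at x iff offset >= 0, with equality iff offset = 0.\<close>
definition offset :: "'v set \<Rightarrow> ('v \<times> 'v \<Rightarrow> real) \<Rightarrow> ('v \<times> 'v \<Rightarrow> real) \<Rightarrow> ('v \<Rightarrow> real) \<Rightarrow> 'v \<times> 'v \<Rightarrow> real" where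
  "offset Vmax w lam x e =
     (if fst e \<in> Vmax then x (fst e) - (w e + lam e * x (snd e))
      else (w e + lam e * x (snd e)) - x (fst e))"

definition ineq_holds :: "'v set \<Rightarrow> ('v \<times> 'v \<Rightarrow> real) \<Rightarrow> ('v \<times> 'v \<Rightarrow> real) \<Rightarrow> ('v \<Rightarrow> real) \<Rightarrow> 'v \<times> 'v \<Rightarrow> bool" where
  "ineq_holds Vmax w lam x e =
     (if fst e \<in> Vmax then x (fst e) \<ge> w e + lam e * x (snd e)
      else x (fst e) \<le> w e + lam e * x (snd e))"

definition eq_holds :: "('v \<times> 'v \<Rightarrow> real) \<Rightarrow> ('v \<times> 'v \<Rightarrow> real) \<Rightarrow> ('v \<Rightarrow> real) \<Rightarrow> 'v \<times> 'v \<Rightarrow> bool" where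
  "eq_holds w lam x e \<longleftrightarrow> x (fst e) = w e + lam e * x (snd e)"

definition solution_H :: "'v set \<Rightarrow> ('v \<times> 'v) set \<Rightarrow> ('v \<times> 'v \<Rightarrow> real) \<Rightarrow> ('v \<times> 'v \<Rightarrow> real) \<Rightarrow> ('v \<Rightarrow> real) \<Rightarrow> bool" where
  "solution_H Vmax E w lam x \<longleftrightarrow> (\<forall>e\<in>E. ineq_holds Vmax w lam x e)"

definition f_strat :: "'v::finite set \<Rightarrow> ('v \<times> 'v \<Rightarrow> real) \<Rightarrow> ('v \<times> 'v \<Rightarrow> real) \<Rightarrow> ('v \<Rightarrow> 'v) \<Rightarrow> ('v \<Rightarrow> real) \<Rightarrow> real" where
  "f_strat Vmax w lam \<sigma> x = (\<Sum>v\<in>UNIV. offset Vmax w lam x (v, \<sigma> v))"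

definition is_basis :: "('v::finite \<times> 'v) set \<Rightarrow> ('v \<times> 'v \<Rightarrow> real) \<Rightarrow> ('v \<times> 'v \<Rightarrow> real) \<Rightarrow> ('v \<times> 'v) set \<Rightarrow> bool" where
  "is_basis E w lam B \<longleftrightarrow> B \<subseteq> E \<and> card B = CARD('v) \<and> (\<exists>!x. \<forall>e\<in>B. eq_holds w lam x e)"

definition basis_valuation :: "'v::finite set \<Rightarrow> ('v \<times> 'v) set \<Rightarrow> ('v \<times> 'v \<Rightarrow> real) \<Rightarrow> ('v \<times> 'v \<Rightarrow> real) \<Rightarrow> ('v \<Rightarrow> real) \<Rightarrow> bool" where
  "basis_valuation Vmax E w lam x \<longleftrightarrow>
     (\<exists>B. is_basis E w lam B \<and> (\<forall>e\<in>B. eq_holds w lam x e)) \<and> solution_H Vmax E w lam x"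

definition defines_strategies :: "('v \<times> 'v) set \<Rightarrow> ('v \<times> 'v \<Rightarrow> real) \<Rightarrow> ('v \<times> 'v \<Rightarrow> real) \<Rightarrow> ('v \<Rightarrow> real) \<Rightarrow> bool" where
  "defines_strategies E w lam x \<longleftrightarrow> (\<forall>v. \<exists>v'. (v, v') \<in> E \<and> eq_holds w lam x (v, v'))"

end

theory Submission
  imports Defs
begin

(* A positional play value is pinned down by its one-step recursion, because discounts are below 1.
   The Bellman operator is a contraction, so it has a fixed point, i.e. a solution of H that defines
   strategies for both players; the strategies read off its tight edges form a saddle point, so every
   such solution is the game value.  For part (1), the play values of a
   co-optimal \<sigma> form the game value, which solves H and makes every \<sigma>-offset vanish; as f\<^sub>\<sigma> is
   nonnegative on solutions of H, its minimum f\<^sub>\<sigma>(\<nu>) is 0. *)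

lemma nonpos_if_discounted_subsolution:
  fixes z :: "'v::finite \<Rightarrow> real"
  assumes "\<And>u. 0 \<le> l u" "\<And>u. l u < 1"
    and sub: "\<And>u. z u \<le> l u * z (s u)"
  shows "z v \<le> 0"
proof -
  have "Max (range z) \<in> range z" by (intro Max_in) auto
  then obtain a where a: "z a = Max (range z)" by (metis imageE)
  have "z a \<le> 0"
  proof (rule ccontr)
    assume "\<not> z a \<le> 0"
    have "z a \<le> l a * z (s a)" by (rule sub)
    also have "\<dots> \<le> l a * z a"
      using a assms(1) by (intro mult_left_mono) auto
    also have "\<dots> < z a"
      using \<open>\<not> z a \<le> 0\<close> assms(2)[of a] by simp
    finally show False by simp
  qed
  moreover have "z v \<le> z a" using a by simp
  ultimately show ?thesis by linarith
qed

context
  fixes w lam :: "'v::finite \<times> 'v \<Rightarrow> real" and \<sigma> :: "'v \<Rightarrow> 'v"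
  assumes lam_nonneg: "\<And>v. 0 \<le> lam (v, \<sigma> v)" and lam_less_1: "\<And>v. lam (v, \<sigma> v) < 1"
begin

lemma play_val_summable:
  "summable (\<lambda>i. w ((\<sigma> ^^ i) v, (\<sigma> ^^ Suc i) v) * (\<Prod>j<i. lam ((\<sigma> ^^ j) v, (\<sigma> ^^ Suc j) v)))"
proof (rule summable_comparison_test)
  define c where "c = Max (range (\<lambda>u. lam (u, \<sigma> u)))"
  define W where "W = Max (range (\<lambda>u. \<bar>w (u, \<sigma> u)\<bar>))"
  have "c \<in> range (\<lambda>u. lam (u, \<sigma> u))" unfolding c_def by (intro Max_in) auto
  then have c: "0 \<le> c" "c < 1" using lam_nonneg lam_less_1 by auto
  show "summable (\<lambda>i. W * c ^ i)" using c by (intro summable_mult summable_geometric) auto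
  show "\<exists>N. \<forall>i\<ge>N. norm (w ((\<sigma> ^^ i) v, (\<sigma> ^^ Suc i) v) * (\<Prod>j<i. lam ((\<sigma> ^^ j) v, (\<sigma> ^^ Suc j) v)))
          \<le> W * c ^ i"
  proof (intro exI allI impI)
    fix i
    have "\<bar>w ((\<sigma> ^^ i) v, (\<sigma> ^^ Suc i) v)\<bar> \<le> W" unfolding W_def by (rule Max_ge) auto
    moreover have "(\<Prod>j<i. lam ((\<sigma> ^^ j) v, (\<sigma> ^^ Suc j) v)) \<le> (\<Prod>j<i. c)"
      unfolding c_def using lam_nonneg by (intro prod_mono) auto
    moreover have "0 \<le> (\<Prod>j<i. lam ((\<sigma> ^^ j) v, (\<sigma> ^^ Suc j) v))"
      using lam_nonneg by (intro prod_nonneg) auto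
    ultimately show "norm (w ((\<sigma> ^^ i) v, (\<sigma> ^^ Suc i) v) * (\<Prod>j<i. lam ((\<sigma> ^^ j) v, (\<sigma> ^^ Suc j) v)))
          \<le> W * c ^ i"
      by (auto simp: abs_mult intro!: mult_mono)
  qed
qed

lemma play_val_step: "play_val w lam \<sigma> v = w (v, \<sigma> v) + lam (v, \<sigma> v) * play_val w lam \<sigma> (\<sigma> v)"
proof -
  define t where "t u i = w ((\<sigma> ^^ i) u, (\<sigma> ^^ Suc i) u) * (\<Prod>j<i. lam ((\<sigma> ^^ j) u, (\<sigma> ^^ Suc j) u))"
    for u i
  have summable: "summable (t u)" for u unfolding t_def by (rule play_val_summable)
  have shift: "t v (Suc i) = lam (v, \<sigma> v) * t (\<sigma> v) i" for i
  proof -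
    have "(\<sigma> ^^ Suc k) v = (\<sigma> ^^ k) (\<sigma> v)" for k by (simp only: funpow_Suc_right comp_apply)
    then show ?thesis unfolding t_def prod.lessThan_Suc_shift by (simp add: mult_ac)
  qed
  have pv: "play_val w lam \<sigma> u = suminf (t u)" for u
    unfolding play_val_def t_def ..
  have "suminf (t v) = (\<Sum>i. t v (Suc i)) + t v 0"
    using suminf_split_head[OF summable] by simp
  also have "(\<Sum>i. t v (Suc i)) = lam (v, \<sigma> v) * suminf (t (\<sigma> v))"
    unfolding shift by (rule suminf_mult[OF summable])
  also have "t v 0 = w (v, \<sigma> v)" unfolding t_def by simp
  finally show ?thesis unfolding pv by simp
qed

lemma play_val_eq_holds: "eq_holds w lam (play_val w lam \<sigma>) (v, \<sigma> v)"
  unfolding eq_holds_def fst_conv snd_conv by (rule play_val_step)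

lemma play_val_ge:
  assumes "\<And>v. y v \<le> w (v, \<sigma> v) + lam (v, \<sigma> v) * y (\<sigma> v)"
  shows "y v \<le> play_val w lam \<sigma> v"
proof -
  have "y v - play_val w lam \<sigma> v \<le> 0"
  proof (rule nonpos_if_discounted_subsolution[where l = "\<lambda>u. lam (u, \<sigma> u)" and s = \<sigma>])
    show "y u - play_val w lam \<sigma> u \<le> lam (u, \<sigma> u) * (y (\<sigma> u) - play_val w lam \<sigma> (\<sigma> u))" for u
      using assms[of u] play_val_step[of u] by (simp add: right_diff_distrib)
  qed (use lam_nonneg lam_less_1 in auto)
  then show ?thesis by simp
qed

lemma play_val_le:
  assumes "\<And>v. w (v, \<sigma> v) + lam (v, \<sigma> v) * y (\<sigma> v) \<le> y v"
  shows "play_val w lam \<sigma> v \<le> y v"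
proof -
  have "play_val w lam \<sigma> v - y v \<le> 0"
  proof (rule nonpos_if_discounted_subsolution[where l = "\<lambda>u. lam (u, \<sigma> u)" and s = \<sigma>])
    show "play_val w lam \<sigma> u - y u \<le> lam (u, \<sigma> u) * (play_val w lam \<sigma> (\<sigma> u) - y (\<sigma> u))" for u
      using assms[of u] play_val_step[of u] by (simp add: right_diff_distrib)
  qed (use lam_nonneg lam_less_1 in auto)
  then show ?thesis by simp
qed

lemma play_val_unique:
  assumes "\<And>v. eq_holds w lam y (v, \<sigma> v)"
  shows "play_val w lam \<sigma> = y"
proof
  fix v
  have eq: "y u = w (u, \<sigma> u) + lam (u, \<sigma> u) * y (\<sigma> u)" for u
    using assms[of u] unfolding eq_holds_def by simp
  have "y v \<le> play_val w lam \<sigma> v" by (rule play_val_ge) (rule eq[THEN eq_refl])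
  moreover have "play_val w lam \<sigma> v \<le> y v" by (rule play_val_le) (rule eq[THEN sym, THEN eq_refl])
  ultimately show "play_val w lam \<sigma> v = y v" by simp
qed

end

lemma joint_strategy_discounted:
  assumes "dpg Vmax E lam" "joint_strategy E \<sigma>"
  shows "0 \<le> lam (v, \<sigma> v)" "lam (v, \<sigma> v) < 1"
  using assms unfolding dpg_def joint_strategy_def by auto

lemma sup_contraction_has_fixpoint:
  fixes F :: "('v::finite \<Rightarrow> real) \<Rightarrow> 'v \<Rightarrow> real"
  assumes "0 \<le> c" "c < 1"
    and contr: "\<And>x y D v. (\<And>u. \<bar>x u - y u\<bar> \<le> D) \<Longrightarrow> \<bar>F x v - F y v\<bar> \<le> c * D"
  obtains x where "F x = x"
proof -
  define X where "X n = (F ^^ n) (\<lambda>_. 0)" for n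
  have X_Suc: "X (Suc n) = F (X n)" for n unfolding X_def by simp
  define K where "K = (\<Sum>u\<in>UNIV. \<bar>X 1 u - X 0 u\<bar>)"
  have step: "\<bar>X (Suc n) v - X n v\<bar> \<le> c ^ n * K" for n v
  proof (induction n arbitrary: v)
    case 0
    show ?case unfolding K_def by (simp, rule member_le_sum) auto
  next
    case (Suc n)
    have "\<bar>F (X (Suc n)) v - F (X n) v\<bar> \<le> c * (c ^ n * K)" by (rule contr) (rule Suc.IH)
    then show ?case by (simp add: X_Suc mult.assoc)
  qed
  define L where "L v = (\<Sum>k. X (Suc k) v - X k v)" for v
  have summable: "summable (\<lambda>k. X (Suc k) v - X k v)" for v
    by (rule summable_comparison_test[where g = "\<lambda>k. c ^ k * K"])
      (use step assms(1,2) in \<open>auto intro!: summable_mult2 summable_geometric\<close>)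
  have X_lim: "(\<lambda>n. X n v) \<longlonglongrightarrow> L v" for v
  proof -
    have "(\<lambda>n. \<Sum>k<n. X (Suc k) v - X k v) \<longlonglongrightarrow> L v"
      unfolding L_def by (rule summable_LIMSEQ[OF summable])
    moreover have "(\<Sum>k<n. X (Suc k) v - X k v) = X n v" for n
      using sum_lessThan_telescope[of "\<lambda>k. X k v" n] by (simp add: X_def)
    ultimately show ?thesis by simp
  qed
  have "F L v = L v" for v
  proof -
    have "\<bar>F (X n) v - F L v\<bar> \<le> c * (\<Sum>u\<in>UNIV. \<bar>X n u - L u\<bar>)" for n
      by (rule contr, rule member_le_sum) auto
    then have "\<forall>\<^sub>F n in sequentially. norm (F (X n) v - F L v) \<le> c * (\<Sum>u\<in>UNIV. \<bar>X n u - L u\<bar>)"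
      unfolding real_norm_def by (intro always_eventually allI)
    moreover have "(\<lambda>n. c * (\<Sum>u\<in>UNIV. \<bar>X n u - L u\<bar>)) \<longlonglongrightarrow> 0"
      using X_lim by (intro tendsto_mult_right_zero tendsto_null_sum tendsto_rabs_zero LIM_zero)
    ultimately have "(\<lambda>n. F (X n) v - F L v) \<longlonglongrightarrow> 0"
      by (rule Lim_null_comparison)
    then have "(\<lambda>n. X (Suc n) v) \<longlonglongrightarrow> F L v"
      unfolding X_Suc by (rule LIM_zero_cancel)
    moreover have "(\<lambda>n. X (Suc n) v) \<longlonglongrightarrow> L v" using X_lim by (rule LIMSEQ_Suc)
    ultimately show ?thesis by (rule LIMSEQ_unique)
  qed
  then show thesis using that by blast
qed

lemma Max_image_le_Max_image_plus:
  fixes f g :: "'a \<Rightarrow> 'b::linordered_ab_group_add"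
  assumes "finite S" "S \<noteq> {}" "\<And>u. u \<in> S \<Longrightarrow> f u \<le> g u + K"
  shows "Max (f ` S) \<le> Max (g ` S) + K"
proof -
  have "f u \<le> Max (g ` S) + K" if "u \<in> S" for u
    using assms(3)[OF that] Max_ge[of "g ` S" "g u"] assms(1) that by (auto intro: order_trans)
  then show ?thesis using assms(1,2) by (simp add: Max_le_iff)
qed

lemma Min_image_le_Min_image_plus:
  fixes f g :: "'a \<Rightarrow> 'b::linordered_ab_group_add"
  assumes "finite S" "S \<noteq> {}" "\<And>u. u \<in> S \<Longrightarrow> f u \<le> g u + K"
  shows "Min (f ` S) \<le> Min (g ` S) + K"
proof -
  have "Min (g ` S) \<in> g ` S" using assms(1,2) by (intro Min_in) auto
  then obtain a where "a \<in> S" "Min (g ` S) = g a" by auto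
  then show ?thesis using assms by (auto simp: Min_le_iff)
qed

lemma dpg_max_discount:
  assumes "dpg Vmax E lam"
  shows "0 \<le> Max (lam ` E)" "Max (lam ` E) < 1"
proof -
  have "E \<noteq> {}" using assms unfolding dpg_def by auto
  then have "Max (lam ` E) \<in> lam ` E" by (intro Max_in) auto
  then show "0 \<le> Max (lam ` E)" "Max (lam ` E) < 1"
    using assms unfolding dpg_def by auto
qed

definition bellman_op :: "'v set \<Rightarrow> ('v \<times> 'v) set \<Rightarrow> ('v \<times> 'v \<Rightarrow> real) \<Rightarrow> ('v \<times> 'v \<Rightarrow> real)
    \<Rightarrow> ('v \<Rightarrow> real) \<Rightarrow> 'v \<Rightarrow> real" where
  "bellman_op Vmax E w lam x v =
     (if v \<in> Vmax then Max else Min) ((\<lambda>u. w (v, u) + lam (v, u) * x u) ` {u. (v, u) \<in> E})"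

lemma bellman_op_contraction:
  fixes Vmax :: "'v::finite set"
  assumes dpg: "dpg Vmax E lam" and dist: "\<And>u. \<bar>x u - y u\<bar> \<le> D"
  shows "\<bar>bellman_op Vmax E w lam x v - bellman_op Vmax E w lam y v\<bar> \<le> Max (lam ` E) * D"
proof -
  define S where "S = {u. (v, u) \<in> E}"
  have S: "finite S" "S \<noteq> {}" using dpg unfolding S_def dpg_def by auto
  define gx where "gx u = w (v, u) + lam (v, u) * x u" for u
  define gy where "gy u = w (v, u) + lam (v, u) * y u" for u
  have edge: "\<bar>gx u - gy u\<bar> \<le> Max (lam ` E) * D" if "u \<in> S" for u
  proof -
    have lam: "0 \<le> lam (v, u)" "lam (v, u) \<le> Max (lam ` E)"
      using that dpg unfolding S_def dpg_def by auto
    have "\<bar>gx u - gy u\<bar> = lam (v, u) * \<bar>x u - y u\<bar>"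
      using lam(1) by (simp add: gx_def gy_def abs_mult flip: right_diff_distrib)
    also have "\<dots> \<le> Max (lam ` E) * D"
      using lam dist dpg_max_discount(1)[OF dpg] by (intro mult_mono) auto
    finally show ?thesis .
  qed
  then have "gx u \<le> gy u + Max (lam ` E) * D" "gy u \<le> gx u + Max (lam ` E) * D" if "u \<in> S" for u
    using edge[OF that] by (auto simp: abs_le_iff)
  then have "Max (gx ` S) \<le> Max (gy ` S) + Max (lam ` E) * D" "Max (gy ` S) \<le> Max (gx ` S) + Max (lam ` E) * D"
    "Min (gx ` S) \<le> Min (gy ` S) + Max (lam ` E) * D" "Min (gy ` S) \<le> Min (gx ` S) + Max (lam ` E) * D"
    by (auto intro!: Max_image_le_Max_image_plus Min_image_le_Min_image_plus S)
  then show ?thesis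
    unfolding bellman_op_def gx_def[symmetric] gy_def[symmetric] S_def[symmetric] by auto
qed

lemma bellman_op_fixpoint_solution:
  fixes Vmax :: "'v::finite set"
  assumes dpg: "dpg Vmax E lam" and fixpoint: "bellman_op Vmax E w lam x = x"
  shows "solution_H Vmax E w lam x" "defines_strategies E w lam x"
proof -
  define S where "S v = (\<lambda>u. w (v, u) + lam (v, u) * x u) ` {u. (v, u) \<in> E}" for v
  have S: "finite (S v)" "S v \<noteq> {}" for v using dpg unfolding S_def dpg_def by auto
  have x: "x v = (if v \<in> Vmax then Max else Min) (S v)" for v
    using fun_cong[OF fixpoint, of v] unfolding bellman_op_def S_def by simp
  have "ineq_holds Vmax w lam x (v, u)" if "(v, u) \<in> E" for v u
  proof -
    have "w (v, u) + lam (v, u) * x u \<in> S v" using that by (auto simp: S_def)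
    then show ?thesis using x[of v] S[of v] by (auto simp: ineq_holds_def)
  qed
  then show "solution_H Vmax E w lam x" unfolding solution_H_def by auto
  have "\<exists>u. (v, u) \<in> E \<and> eq_holds w lam x (v, u)" for v
  proof -
    have "x v \<in> S v" using x[of v] S[of v] by (simp add: Max_in Min_in)
    then show ?thesis unfolding S_def eq_holds_def by auto
  qed
  then show "defines_strategies E w lam x" unfolding defines_strategies_def by blast
qed

lemma optimality_solution_exists:
  fixes Vmax :: "'v::finite set"
  assumes dpg: "dpg Vmax E lam"
  obtains x where "solution_H Vmax E w lam x" "defines_strategies E w lam x"
proof -
  obtain x where "bellman_op Vmax E w lam x = x"
    using sup_contraction_has_fixpoint dpg_max_discount[OF dpg] bellman_op_contraction[OF dpg]
    by metis
  then show thesis using that bellman_op_fixpoint_solution[OF dpg] by blast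
qed

lemma SUP_INF_eq_saddle_value:
  fixes f :: "'a \<Rightarrow> 'b \<Rightarrow> real"
  assumes "finite A" "finite B" "a \<in> A" "b \<in> B"
    and "\<And>j. j \<in> B \<Longrightarrow> x \<le> f a j" and "\<And>i. i \<in> A \<Longrightarrow> f i b \<le> x"
  shows "(SUP i\<in>A. INF j\<in>B. f i j) = x"
proof (rule antisym)
  show "(SUP i\<in>A. INF j\<in>B. f i j) \<le> x"
    using assms by (intro cSUP_least order_trans[OF cINF_lower]) auto
  have "x \<le> (INF j\<in>B. f a j)" using assms by (intro cINF_greatest) auto
  also have "\<dots> \<le> (SUP i\<in>A. INF j\<in>B. f i j)" using assms by (intro cSUP_upper) auto
  finally show "x \<le> (SUP i\<in>A. INF j\<in>B. f i j)" .
qed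

lemma game_val_eq_optimality_solution:
  fixes Vmax :: "'v::finite set"
  assumes dpg: "dpg Vmax E lam"
    and sol: "solution_H Vmax E w lam x" and strat: "defines_strategies E w lam x"
  shows "game_val Vmax E w lam = x"
proof
  fix v
  obtain s where s: "\<And>u. (u, s u) \<in> E" "\<And>u. eq_holds w lam x (u, s u)"
    using strat unfolding defines_strategies_def by metis
  have ineq: "ineq_holds Vmax w lam x e" if "e \<in> E" for e
    using sol that unfolding solution_H_def by blast
  have joint: "joint_strategy E (combine Vmax smax smin)"
    if "\<forall>u\<in>Vmax. (u, smax u) \<in> E" "\<forall>u\<in>-Vmax. (u, smin u) \<in> E" for smax smin
    using that unfolding joint_strategy_def combine_def by auto
  have lower: "x v \<le> play_val w lam (combine Vmax s smin) v"
    if smin: "\<forall>u\<in>-Vmax. (u, smin u) \<in> E" for smin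
  proof (rule play_val_ge)
    show "0 \<le> lam (u, combine Vmax s smin u)" "lam (u, combine Vmax s smin u) < 1" for u
      using joint_strategy_discounted[OF dpg joint] s(1) smin by auto
    show "x u \<le> w (u, combine Vmax s smin u) + lam (u, combine Vmax s smin u) * x (combine Vmax s smin u)" for u
      using s(2)[of u] ineq[of "(u, smin u)"] smin
      by (cases "u \<in> Vmax") (auto simp: combine_def eq_holds_def ineq_holds_def)
  qed
  have upper: "play_val w lam (combine Vmax smax s) v \<le> x v"
    if smax: "\<forall>u\<in>Vmax. (u, smax u) \<in> E" for smax
  proof (rule play_val_le)
    show "0 \<le> lam (u, combine Vmax smax s u)" "lam (u, combine Vmax smax s u) < 1" for u
      using joint_strategy_discounted[OF dpg joint] s(1) smax by auto
    show "w (u, combine Vmax smax s u) + lam (u, combine Vmax smax s u) * x (combine Vmax smax s u) \<le> x u" for u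
      using s(2)[of u] ineq[of "(u, smax u)"] smax
      by (cases "u \<in> Vmax") (auto simp: combine_def eq_holds_def ineq_holds_def)
  qed
  show "game_val Vmax E w lam v = x v"
    unfolding game_val_def
  proof (rule SUP_INF_eq_saddle_value)
    show "s \<in> {s. \<forall>u\<in>Vmax. (u, s u) \<in> E}" "s \<in> {s. \<forall>u\<in>-Vmax. (u, s u) \<in> E}"
      using s(1) by simp_all
  qed (use lower upper in simp_all)
qed

lemma game_val_optimality_solution:
  fixes Vmax :: "'v::finite set"
  assumes "dpg Vmax E lam"
  shows "solution_H Vmax E w lam (game_val Vmax E w lam)"
    and "defines_strategies E w lam (game_val Vmax E w lam)"
proof -
  obtain x where "solution_H Vmax E w lam x" "defines_strategies E w lam x"
    using optimality_solution_exists[OF assms] .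
  moreover from calculation have "game_val Vmax E w lam = x"
    by (rule game_val_eq_optimality_solution[OF assms])
  ultimately show "solution_H Vmax E w lam (game_val Vmax E w lam)"
    and "defines_strategies E w lam (game_val Vmax E w lam)" by simp_all
qed

lemma f_strat_nonneg:
  assumes "joint_strategy E \<sigma>" "solution_H Vmax E w lam x"
  shows "0 \<le> f_strat Vmax w lam \<sigma> x"
proof -
  have ineq: "ineq_holds Vmax w lam x (v, \<sigma> v)" for v
    using assms unfolding joint_strategy_def solution_H_def by blast
  have "0 \<le> offset Vmax w lam x (v, \<sigma> v)" for v
    using ineq[of v] unfolding ineq_holds_def offset_def by (simp split: if_split_asm)
  then show ?thesis unfolding f_strat_def by (intro sum_nonneg)
qed

lemma f_strat_eq_0:
  assumes "\<And>v. eq_holds w lam x (v, \<sigma> v)"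
  shows "f_strat Vmax w lam \<sigma> x = 0"
proof -
  have "offset Vmax w lam x (v, \<sigma> v) = 0" for v
    using assms[of v] unfolding offset_def eq_holds_def by simp
  then show ?thesis unfolding f_strat_def by simp
qed

theorem theorem3p3:
  fixes Vmax :: "'v::finite set" and E :: "('v \<times> 'v) set"
    and w lam :: "'v \<times> 'v \<Rightarrow> real" and \<sigma> :: "'v \<Rightarrow> 'v" and \<nu> :: "'v \<Rightarrow> real"
  assumes "dpg Vmax E lam"
    and "joint_strategy E \<sigma>"
    and "basis_valuation Vmax E w lam \<nu>"
    and "\<forall>x. solution_H Vmax E w lam x \<longrightarrow> f_strat Vmax w lam \<sigma> \<nu> \<le> f_strat Vmax w lam \<sigma> x"
  shows "(co_optimal Vmax E w lam \<sigma> \<longrightarrow> f_strat Vmax w lam \<sigma> \<nu> = 0)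
    \<and> ((defines_strategies E w lam \<nu> \<and> (\<forall>v. eq_holds w lam \<nu> (v, \<sigma> v)))
        \<longrightarrow> co_optimal Vmax E w lam \<sigma> \<and> \<nu> = game_val Vmax E w lam)"
proof -
  note discounted = joint_strategy_discounted[OF assms(1,2)]
  have \<nu>_solution: "solution_H Vmax E w lam \<nu>"
    using assms(3) unfolding basis_valuation_def by simp
  have "f_strat Vmax w lam \<sigma> \<nu> = 0" if "co_optimal Vmax E w lam \<sigma>"
  proof -
    have "solution_H Vmax E w lam (play_val w lam \<sigma>)"
      using that game_val_optimality_solution(1)[OF assms(1)] unfolding co_optimal_def by simp
    then have "f_strat Vmax w lam \<sigma> \<nu> \<le> f_strat Vmax w lam \<sigma> (play_val w lam \<sigma>)"
      using assms(4) by blast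
    also have "\<dots> = 0"
      by (intro f_strat_eq_0 play_val_eq_holds) (use discounted in auto)
    finally show ?thesis using f_strat_nonneg[OF assms(2) \<nu>_solution] by simp
  qed
  moreover have "co_optimal Vmax E w lam \<sigma> \<and> \<nu> = game_val Vmax E w lam"
    if "defines_strategies E w lam \<nu>" "\<forall>v. eq_holds w lam \<nu> (v, \<sigma> v)"
  proof -
    have "game_val Vmax E w lam = \<nu>"
      by (rule game_val_eq_optimality_solution[OF assms(1) \<nu>_solution that(1)])
    moreover have "play_val w lam \<sigma> = \<nu>"
      by (rule play_val_unique) (use discounted that(2) in auto)
    ultimately show ?thesis unfolding co_optimal_def by simp
  qed
  ultimately show ?thesis by blast
qed

end
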